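(* For every integer $n\geq 2$, there is a Hamilton cycle in the $n$-dimensional hypercube $Q_n$ that contains every edge of every chain of the Greene–Kleitman symmetric chain decomposition of $Q_n$.
   Context: $Q_n$ is the graph on all $\{0,1\}$-strings of length $n$, adjacent iff differing in exactly one position; level $k$ is the set of strings with exactly $k$ ones. A symmetric chain is a path $(x_k,x_{k+1},\ldots,x_{n-k})$ in $Q_n$ with $x_i$ in level $i$ for all $i$; a symmetric chain decomposition is a partition of the vertex set of $Q_n$ into symmetric chains. The Greene–Kleitman symmetric chain decomposition is defined as follows: for a vertex $x$, interpret each $0$ as an opening bracket and each $1$ as a closing bracket and match closest pairs of opening and closing brackets in the usual way; the chain containing $x$ is obtained by repeatedly flipping the leftmost unmatched $0$ to $1$ (to ascend) or the rightmost unmatched $1$ to $0$ (to descend), until no unmatched bit can be flipped in that direction. *)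

theory Defs
  imports Main
begin

text \<open>Bitstrings of length n are lists of booleans; False = 0 (opening bracket),
True = 1 (closing bracket). Positions are 0-based, left to right.\<close>

definition cube_vertices :: "nat \<Rightarrow> bool list set" where
  "cube_vertices n = {x. length x = n}"

definition cube_adj :: "bool list \<Rightarrow> bool list \<Rightarrow> bool" where
  "cube_adj x y \<longleftrightarrow> length x = length y \<and> card {i. i < length x \<and> x ! i \<noteq> y ! i} = 1"

text \<open>Bracket matching by a left-to-right scan with a stack of positions of
unmatched opening brackets. Result: (positions of unmatched 0s (as stack),
positions of unmatched 1s).\<close>

fun bracket_scan :: "nat \<Rightarrow> nat list \<Rightarrow> nat list \<Rightarrow> bool list \<Rightarrow> nat list \<times> nat list" where
  "bracket_scan i st ones [] = (st, ones)"
| "bracket_scan i st ones (False # xs) = bracket_scan (Suc i) (i # st) ones xs"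
| "bracket_scan i st ones (True # xs) =
     (case st of [] \<Rightarrow> bracket_scan (Suc i) [] (ones @ [i]) xs
               | _ # st' \<Rightarrow> bracket_scan (Suc i) st' ones xs)"

definition unmatched_zeros :: "bool list \<Rightarrow> nat set" where
  "unmatched_zeros x = set (fst (bracket_scan 0 [] [] x))"

definition unmatched_ones :: "bool list \<Rightarrow> nat set" where
  "unmatched_ones x = set (snd (bracket_scan 0 [] [] x))"

definition gk_up :: "bool list \<Rightarrow> bool list option" where
  "gk_up x = (if unmatched_zeros x = {} then None
              else Some (x[Min (unmatched_zeros x) := True]))"

definition gk_down :: "bool list \<Rightarrow> bool list option" where
  "gk_down x = (if unmatched_ones x = {} then None
                else Some (x[Max (unmatched_ones x) := False]))"

definition gk_chain_edges :: "nat \<Rightarrow> bool list set set" where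
  "gk_chain_edges n =
     {{x, y} | x y. x \<in> cube_vertices n \<and> (gk_up x = Some y \<or> gk_down x = Some y)}"

definition ham_cycle :: "nat \<Rightarrow> bool list list \<Rightarrow> bool" where
  "ham_cycle n C \<longleftrightarrow> distinct C \<and> set C = cube_vertices n \<and> length C \<ge> 3 \<and>
     (\<forall>i < length C. cube_adj (C ! i) (C ! ((i + 1) mod length C)))"

definition cycle_edges :: "bool list list \<Rightarrow> bool list set set" where
  "cycle_edges C = {{C ! i, C ! ((i + 1) mod length C)} | i. i < length C}"

end

theory Submission
  imports Defs
begin

text \<open>The proof is an induction from \<open>Q\<^sub>m\<close> to \<open>Q\<^sub>m\<^sub>+\<^sub>2\<close> on Hamilton paths of \<open>Q\<^sub>m\<close> that
  run through the Greene--Kleitman chains one after the other, each one upwards or downwards.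
  Appending (or prepending) a bit turns every chain of \<open>Q\<^sub>m\<close> into one chain of \<open>Q\<^sub>m\<^sub>+\<^sub>1\<close> that is
  one vertex longer and one that is one vertex shorter. Adding two bits thus turns a chain \<open>c\<close> into
  at most four chains of \<open>Q\<^sub>m\<^sub>+\<^sub>2\<close>: one of them follows \<open>c\<close>, and the others, suitably oriented,
  form a second path alongside \<open>c\<close>. Going once along the path of \<open>Q\<^sub>m\<close> through the first kind
  of chains and back in reverse order along the second paths visits every vertex of
  \<open>Q\<^sub>m\<^sub>+\<^sub>2\<close> once, and the two ends of this walk are adjacent.

  The chains of \<open>Q\<^sub>m\<close> have length of parity opposite to \<open>m\<close>. For odd \<open>m\<close> all chains have at least
  two vertices and the two bits are appended. For even \<open>m\<close> a chain may consist of a single vertex,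
  so one bit is added at each end instead; the parallel chains then only join up if consecutive
  chains of the path alternate in direction, an invariant that the construction preserves.\<close>

lemma Max_Suc_image: "finite S \<Longrightarrow> S \<noteq> {} \<Longrightarrow> Max (Suc ` S) = Suc (Max S)"
  by (simp add: mono_Max_commute[symmetric] mono_Suc)

lemma Min_Suc_image: "finite S \<Longrightarrow> S \<noteq> {} \<Longrightarrow> Min (Suc ` S) = Suc (Min S)"
  by (simp add: mono_Min_commute[symmetric] mono_Suc)

lemma Min_insert_greater:
  fixes n :: "'a :: linorder"
  shows "finite S \<Longrightarrow> S \<noteq> {} \<Longrightarrow> \<forall>j\<in>S. j < n \<Longrightarrow> Min (insert n S) = Min S"
  by (simp add: min_def) (meson Min_in not_less)

lemma Min_less_Max:
  fixes S :: "'a :: linorder set"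
  assumes "finite S" "S - {Max S} \<noteq> {}"
  shows "Min S < Max S"
proof -
  obtain k where k: "k \<in> S" "k \<noteq> Max S" using assms(2) by auto
  then have "Min S \<le> k" using assms(1) by simp
  also have "k < Max S" using order_le_neq_trans[OF Max_ge[OF assms(1) k(1)] k(2)] .
  finally show ?thesis .
qed

definition orient :: "bool \<Rightarrow> 'a list \<Rightarrow> 'a list" where
  "orient q xs = (if q then xs else rev xs)"

lemma orient_simps [simp]:
  "orient True xs = xs" "orient False xs = rev xs" "set (orient q xs) = set xs"
  "length (orient q xs) = length xs" "orient q xs = [] \<longleftrightarrow> xs = []"
  "hd (orient q xs) = (if q then hd xs else last xs)" "last (orient q xs) = (if q then last xs else hd xs)"
  by (simp_all add: orient_def hd_rev last_rev)

definition rel_path :: "('a \<Rightarrow> 'a \<Rightarrow> bool) \<Rightarrow> 'a list \<Rightarrow> 'a \<Rightarrow> 'a \<Rightarrow> bool" where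
  "rel_path R xs x y \<longleftrightarrow> xs \<noteq> [] \<and> successively R xs \<and> hd xs = x \<and> last xs = y"

lemma rel_path_append:
  "rel_path R xs x y \<Longrightarrow> rel_path R ys x' y' \<Longrightarrow> R y x' \<Longrightarrow> rel_path R (xs @ ys) x y'"
  by (auto simp: rel_path_def successively_append_iff)

lemma rel_path_rev: "symp R \<Longrightarrow> rel_path R xs x y \<Longrightarrow> rel_path R (rev xs) y x"
  by (auto simp: rel_path_def hd_rev last_rev elim: successively_mono dest: sympD)

lemma rel_path_orient:
  "symp R \<Longrightarrow> rel_path R xs x y \<Longrightarrow> rel_path R (orient q xs) (if q then x else y) (if q then y else x)"
  by (auto simp: orient_def rel_path_rev)

lemma rel_path_map:
  "rel_path R xs x y \<Longrightarrow> (\<And>a b. R a b \<Longrightarrow> R' (h a) (h b)) \<Longrightarrow> rel_path R' (map h xs) (h x) (h y)"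
  by (auto simp: rel_path_def successively_map hd_map last_map elim: successively_mono)

lemma rel_path_concat_map:
  assumes "ds \<noteq> []" "\<And>d. d \<in> set ds \<Longrightarrow> rel_path R (blk d) (h d) (l d)"
    and "successively (\<lambda>d e. R (l d) (h e)) ds"
  shows "rel_path R (concat (map blk ds)) (h (hd ds)) (l (last ds))"
  using assms
proof (induction ds)
  case (Cons d ds)
  show ?case
  proof (cases "ds = []")
    case False
    then have "rel_path R (concat (map blk ds)) (h (hd ds)) (l (last ds))"
      using Cons by (simp add: successively_Cons)
    moreover have "R (l d) (h (hd ds))" using Cons.prems(3) False by (simp add: successively_Cons)
    ultimately show ?thesis using rel_path_append Cons.prems(2)[of d] False by fastforce
  qed (use Cons.prems in simp)
qed simp

text \<open>A walk is a list of lists, each traversed forwards (flag \<open>True\<close>) or backwards; its trail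
  is the resulting concatenation.\<close>

definition trail :: "(bool \<times> 'a list) list \<Rightarrow> 'a list" where
  "trail ds = concat (map (\<lambda>(q, xs). orient q xs) ds)"

definition reverse_walk :: "(bool \<times> 'a list) list \<Rightarrow> (bool \<times> 'a list) list" where
  "reverse_walk ds = rev (map (\<lambda>(q, xs). (\<not> q, xs)) ds)"

definition orient_walk :: "bool \<Rightarrow> (bool \<times> 'a list) list \<Rightarrow> (bool \<times> 'a list) list" where
  "orient_walk q ds = (if q then ds else reverse_walk ds)"

lemma trail_simps [simp]:
  "trail [] = []" "trail ((q, xs) # ds) = orient q xs @ trail ds" "trail (ds @ es) = trail ds @ trail es"
  by (simp_all add: trail_def)

lemma trail_reverse_walk [simp]: "trail (reverse_walk ds) = rev (trail ds)"
  by (induction ds) (auto simp: reverse_walk_def orient_def)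

lemma trail_orient_walk [simp]: "trail (orient_walk q ds) = orient q (trail ds)"
  by (simp add: orient_walk_def orient_def)

lemma trail_concat: "trail (concat dss) = concat (map trail dss)"
  by (induction dss) auto

lemma set_trail: "set (trail ds) = (\<Union>(q, xs)\<in>set ds. set xs)"
  by (auto simp: trail_def)

lemma length_trail: "length (trail ds) = (\<Sum>(q, xs)\<leftarrow>ds. length xs)"
  by (induction ds) auto

lemma map_fst_reverse_walk: "map fst (reverse_walk ds) = rev (map Not (map fst ds))"
  by (induction ds) (auto simp: reverse_walk_def)

lemma rel_path_neq_Not: "rel_path (\<noteq>) xs x y \<Longrightarrow> rel_path (\<noteq>) (rev (map Not xs)) (\<not> y) (\<not> x)"
  using rel_path_rev[OF _ rel_path_map[where h = Not and R' = "(\<noteq>)"]] by (auto simp: symp_def)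

text \<open>Replacing every list \<open>c\<close> of a walk by a path \<open>seg c\<close> from \<open>e True (hd c)\<close> to
  \<open>e False (last c)\<close>: traversed in direction \<open>q\<close>, the new segment starts at \<open>e q\<close> of the point where
  \<open>c\<close> starts and ends at \<open>e (\<not> q)\<close> of the point where \<open>c\<close> ends, so consecutive segments join up
  when \<open>e\<close> agrees at every change of direction.\<close>

lemma rel_path_trail_map:
  fixes e :: "bool \<Rightarrow> 'a \<Rightarrow> 'b"
  assumes "symp R" "successively S (trail ds)" "ds \<noteq> []"
    and "\<And>c. c \<in> snd ` set ds \<Longrightarrow> c \<noteq> [] \<and> rel_path R (seg c) (e True (hd c)) (e False (last c))"
    and e: "\<And>q x y. S x y \<Longrightarrow> R (e q x) (e q y)"
    and "successively (\<lambda>(p, _) (q, _). e (\<not> p) = e q) ds"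
  shows "rel_path R (trail (map (apsnd seg) ds))
    (e (fst (hd ds)) (hd (trail ds))) (e (\<not> fst (last ds)) (last (trail ds)))"
  using assms(2-4,6)
proof (induction ds rule: induct_list012)
  have seg: "rel_path R (orient q (seg c)) (e q (hd (orient q c))) (e (\<not> q) (last (orient q c)))"
    if "c \<noteq> [] \<and> rel_path R (seg c) (e True (hd c)) (e False (last c))" for q c
    using that rel_path_orient[OF assms(1), of "seg c" _ _ q] by (cases q) (auto simp: hd_rev last_rev)
  {
    case (2 d)
    then show ?case using seg[of "snd d" "fst d"] by (cases d) simp
  next
    case (3 d d' ds)
    obtain q c where d: "d = (q, c)" by fastforce
    have c: "c \<noteq> [] \<and> rel_path R (seg c) (e True (hd c)) (e False (last c))"
      using "3.prems"(3)[of c] d by simp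
    have "snd d' \<noteq> []" using "3.prems"(3)[of "snd d'"] by simp
    then have "trail (d' # ds) \<noteq> []" by (cases d') simp
    then have path: "successively S (trail (d' # ds))" "S (last (orient q c)) (hd (trail (d' # ds)))"
      using "3.prems"(1) c d by (simp_all add: successively_append_iff)
    have "e (\<not> q) = e (fst d')" using "3.prems"(4) d by (cases d') simp
    moreover have "rel_path R (trail (map (apsnd seg) (d' # ds)))
        (e (fst d') (hd (trail (d' # ds)))) (e (\<not> fst (last (d' # ds))) (last (trail (d' # ds))))"
      using "3.IH"(2)[OF path(1)] "3.prems"(3,4) by (simp add: successively_Cons)
    ultimately show ?case
      using rel_path_append[OF seg[OF c, of q]] e[OF path(2), of "\<not> q"] d c \<open>trail (d' # ds) \<noteq> []\<close>
      by simp
  }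
qed simp

definition lift_walk ::
  "('a list \<Rightarrow> 'a list) \<Rightarrow> ('a list \<Rightarrow> (bool \<times> 'a list) list) \<Rightarrow> (bool \<times> 'a list) list \<Rightarrow> (bool \<times> 'a list) list"
  where "lift_walk out back ds =
    map (apsnd out) ds @ reverse_walk (concat (map (\<lambda>(q, c). orient_walk q (back c)) ds))"

lemma trail_lift_walk:
  "trail (lift_walk out back ds) =
     trail (map (apsnd out) ds) @ rev (trail (map (apsnd (\<lambda>c. trail (back c))) ds))"
  by (induction ds) (auto simp: lift_walk_def trail_concat)

lemma set_trail_lift_walk:
  "set (trail (lift_walk out back ds)) = (\<Union>(q, c)\<in>set ds. set (out c) \<union> set (trail (back c)))"
  by (induction ds) (auto simp: trail_lift_walk)

lemma length_trail_lift_walk: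
  "length (trail (lift_walk out back ds)) = (\<Sum>(q, c)\<leftarrow>ds. length (out c) + length (trail (back c)))"
  by (induction ds) (auto simp: trail_lift_walk)

lemma mem_lift_walk:
  assumes "(p, d) \<in> set (lift_walk out back ds)"
  obtains q c where "(q, c) \<in> set ds" "d = out c \<or> (\<exists>p'. (p', d) \<in> set (back c))"
  using assms by (auto simp: lift_walk_def reverse_walk_def orient_walk_def split: if_splits)

lemma alternating_lift_walk:
  assumes "distinct_adj (map fst ds)"
    and "\<And>c. c \<in> snd ` set ds \<Longrightarrow> rel_path (\<noteq>) (map fst (back c)) True True"
  shows "distinct_adj (map fst (lift_walk out back ds))"
proof (cases "ds = []")
  case False
  let ?F = "concat (map (\<lambda>(q, c). map fst (orient_walk q (back c))) ds)"
  have "rel_path (\<noteq>) (map fst (orient_walk q (back c))) q q" if "(q, c) \<in> set ds" for q c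
    using that assms(2)[of c] rel_path_neq_Not by (force simp: orient_walk_def map_fst_reverse_walk)
  then have "rel_path (\<noteq>) ?F (fst (hd ds)) (fst (last ds))"
    using rel_path_concat_map[OF False, of "(\<noteq>)" "\<lambda>(q, c). map fst (orient_walk q (back c))" fst fst]
      assms(1) by (auto simp: distinct_adj_def successively_map split_def)
  then have "rel_path (\<noteq>) (rev (map Not ?F)) (\<not> fst (last ds)) (\<not> fst (hd ds))"
    by (rule rel_path_neq_Not)
  then have "distinct_adj (rev (map Not ?F))" "rev (map Not ?F) \<noteq> []"
    "hd (rev (map Not ?F)) = (\<not> fst (last ds))"
    unfolding rel_path_def distinct_adj_def by blast+
  moreover have "map fst (lift_walk out back ds) = map fst ds @ rev (map Not ?F)"
    by (simp add: lift_walk_def map_fst_reverse_walk map_concat split_def comp_def)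
  ultimately show ?thesis
    using assms(1) False by (simp add: distinct_adj_append_iff last_map)
qed (simp add: lift_walk_def reverse_walk_def)

section \<open>Unmatched brackets\<close>

lemma bracket_scan_snoc:
  "bracket_scan i st ones (xs @ [b]) =
     (case bracket_scan i st ones xs of (st', ones') \<Rightarrow> bracket_scan (i + length xs) st' ones' [b])"
  by (induction i st ones xs rule: bracket_scan.induct) (auto split: list.splits prod.splits)

lemma bracket_scan_snoc_False:
  "bracket_scan 0 [] [] (x @ [False]) =
     (length x # fst (bracket_scan 0 [] [] x), snd (bracket_scan 0 [] [] x))"
  by (simp add: bracket_scan_snoc split: prod.splits)

lemma bracket_scan_snoc_True:
  "bracket_scan 0 [] [] (x @ [True]) =
     (case fst (bracket_scan 0 [] [] x) of
        [] \<Rightarrow> ([], snd (bracket_scan 0 [] [] x) @ [length x])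
      | _ # st \<Rightarrow> (st, snd (bracket_scan 0 [] [] x)))"
  by (simp add: bracket_scan_snoc split: prod.splits list.splits)

lemma bracket_scan_invariant:
  fixes x :: "bool list"
  defines "zs \<equiv> fst (bracket_scan 0 [] [] x)" and "os \<equiv> snd (bracket_scan 0 [] [] x)"
  shows "sorted_wrt (>) zs \<and> (\<forall>j\<in>set zs. j < length x \<and> \<not> x ! j)
    \<and> (\<forall>j\<in>set os. j < length x \<and> x ! j) \<and> (\<forall>i\<in>set os. \<forall>j\<in>set zs. i < j)"
  unfolding zs_def os_def
proof (induction x rule: rev_induct)
  case (snoc b x)
  then show ?case
    by (cases b) (auto simp: bracket_scan_snoc_False bracket_scan_snoc_True nth_append split: list.splits)
qed simp

lemma unmatched_zero_less_length: "j \<in> unmatched_zeros x \<Longrightarrow> j < length x"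
  and nth_unmatched_zero: "j \<in> unmatched_zeros x \<Longrightarrow> \<not> x ! j"
  and unmatched_one_less_length: "j \<in> unmatched_ones x \<Longrightarrow> j < length x"
  and nth_unmatched_one: "j \<in> unmatched_ones x \<Longrightarrow> x ! j"
  and unmatched_one_less_unmatched_zero: "i \<in> unmatched_ones x \<Longrightarrow> j \<in> unmatched_zeros x \<Longrightarrow> i < j"
  using bracket_scan_invariant[of x] by (auto simp: unmatched_zeros_def unmatched_ones_def)

lemma finite_unmatched_zeros [simp]: "finite (unmatched_zeros x)"
  and finite_unmatched_ones [simp]: "finite (unmatched_ones x)"
  by (simp_all add: unmatched_zeros_def unmatched_ones_def)

lemma unmatched_zeros_snoc_False: "unmatched_zeros (x @ [False]) = insert (length x) (unmatched_zeros x)"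
  and unmatched_ones_snoc_False: "unmatched_ones (x @ [False]) = unmatched_ones x"
  by (simp_all add: unmatched_zeros_def unmatched_ones_def bracket_scan_snoc_False)

lemma unmatched_ones_snoc_True:
  "unmatched_ones (x @ [True]) =
     (if unmatched_zeros x = {} then insert (length x) (unmatched_ones x) else unmatched_ones x)"
  by (auto simp: unmatched_ones_def unmatched_zeros_def bracket_scan_snoc_True split: list.splits)

text \<open>A closing bracket is matched with the most recent unmatched opening bracket, which sits on
  top of the stack and is therefore the largest unmatched zero.\<close>

lemma unmatched_zeros_snoc_True:
  "unmatched_zeros (x @ [True]) = unmatched_zeros x - {Max (unmatched_zeros x)}"
proof (cases "fst (bracket_scan 0 [] [] x)")
  case Nil
  then show ?thesis by (simp add: unmatched_zeros_def bracket_scan_snoc_True)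
next
  case (Cons h st)
  then have "\<forall>j\<in>set st. j < h" using bracket_scan_invariant[of x] by simp
  then have "Max (set (h # st)) = h" and "h \<notin> set st" by (auto intro!: Max_eqI)
  then show ?thesis using Cons by (auto simp: unmatched_zeros_def bracket_scan_snoc_True)
qed

lemmas unmatched_snoc =
  unmatched_zeros_snoc_False unmatched_ones_snoc_False
  unmatched_zeros_snoc_True unmatched_ones_snoc_True

lemma unmatched_Cons_True:
  "unmatched_zeros (True # x) = Suc ` unmatched_zeros x \<and>
   unmatched_ones (True # x) = insert 0 (Suc ` unmatched_ones x)"
proof (induction x rule: rev_induct)
  case Nil
  then show ?case by (simp add: unmatched_zeros_def unmatched_ones_def)
next
  case (snoc b y)
  then show ?case
    using unmatched_snoc[of "True # y"]
    by (cases b; cases "unmatched_zeros y = {}")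
      (auto simp: unmatched_snoc insert_commute Max_Suc_image image_set_diff)
qed

lemma unmatched_Cons_False:
  "unmatched_zeros (False # x) =
     (if unmatched_ones x = {} then insert 0 (Suc ` unmatched_zeros x) else Suc ` unmatched_zeros x) \<and>
   unmatched_ones (False # x) = Suc ` (unmatched_ones x - {Min (unmatched_ones x)})"
proof (induction x rule: rev_induct)
  case Nil
  then show ?case by (simp add: unmatched_zeros_def unmatched_ones_def)
next
  case (snoc b y)
  note snoc' = unmatched_snoc[of "False # y", simplified]
  show ?case
  proof (cases "b \<and> unmatched_zeros y = {} \<and> unmatched_ones y \<noteq> {}")
    case True
    have below: "\<forall>j\<in>unmatched_ones y. j < length y" by (auto dest: unmatched_one_less_length)
    then have "Min (insert (length y) (unmatched_ones y)) = Min (unmatched_ones y)"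
      using True by (intro Min_insert_greater) auto
    moreover have "Min (unmatched_ones y) \<noteq> length y"
      using True below Min_in[of "unmatched_ones y"] by fastforce
    ultimately show ?thesis using snoc True by (auto simp: snoc' unmatched_snoc insert_commute)
  next
    case False
    then show ?thesis
      using snoc by (cases b; cases "unmatched_zeros y = {}")
        (auto simp: snoc' unmatched_snoc insert_commute Max_Suc_image image_set_diff max_def)
  qed
qed

lemma even_card_unmatched:
  "even (card (unmatched_zeros x) + card (unmatched_ones x) + length x)"
proof (induction x rule: rev_induct)
  case Nil
  then show ?case by (simp add: unmatched_zeros_def unmatched_ones_def)
next
  case (snoc b x)
  have "length x \<notin> unmatched_zeros x" "length x \<notin> unmatched_ones x"
    by (auto dest: unmatched_zero_less_length unmatched_one_less_length)
  moreover have "unmatched_zeros x \<noteq> {} \<Longrightarrow> card (unmatched_zeros x) \<ge> 1"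
    by (simp add: Suc_leI card_gt_0_iff)
  ultimately show ?case
    using snoc by (cases b) (auto simp: unmatched_snoc)
qed

lemma Min_unmatched_zeros_less_length:
  "unmatched_zeros x \<noteq> {} \<Longrightarrow> Min (unmatched_zeros x) < length x"
  using Min_in[OF finite_unmatched_zeros] unmatched_zero_less_length by blast

lemma gk_up_snoc_False:
  "gk_up (x @ [False]) =
     (if unmatched_zeros x = {} then Some (x @ [True]) else map_option (\<lambda>w. w @ [False]) (gk_up x))"
proof (cases "unmatched_zeros x = {}")
  case False
  have "Min (insert (length x) (unmatched_zeros x)) = Min (unmatched_zeros x)"
    using False by (intro Min_insert_greater) (auto dest: unmatched_zero_less_length)
  then show ?thesis
    using False Min_unmatched_zeros_less_length[OF False]
    by (simp add: gk_up_def unmatched_snoc list_update_append1)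
qed (simp add: gk_up_def unmatched_snoc)

lemma gk_up_snoc_True:
  "gk_up (x @ [True]) =
     (if unmatched_zeros x - {Max (unmatched_zeros x)} = {} then None
      else map_option (\<lambda>w. w @ [True]) (gk_up x))"
proof (cases "unmatched_zeros x - {Max (unmatched_zeros x)} = {}")
  case False
  then have ne: "unmatched_zeros x \<noteq> {}" by auto
  have "Min (unmatched_zeros x) < Max (unmatched_zeros x)" using False by (simp add: Min_less_Max)
  then have "Min (unmatched_zeros x - {Max (unmatched_zeros x)}) = Min (unmatched_zeros x)"
    using ne by (intro Min_eqI) auto
  then show ?thesis
    using False ne Min_unmatched_zeros_less_length[OF ne]
    by (simp add: gk_up_def unmatched_snoc list_update_append1)
qed (simp add: gk_up_def unmatched_snoc)

lemma gk_up_SomeD: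
  "gk_up x = Some y \<Longrightarrow> unmatched_zeros x \<noteq> {} \<and> y = x[Min (unmatched_zeros x) := True]"
  by (simp add: gk_up_def split: if_splits)

lemma length_gk_up: "gk_up x = Some y \<Longrightarrow> length y = length x"
  and length_gk_down: "gk_down x = Some y \<Longrightarrow> length y = length x"
  by (auto simp: gk_up_def gk_down_def split: if_splits)

lemma unmatched_gk_up:
  assumes "gk_up v = Some w"
  shows "unmatched_zeros w = unmatched_zeros v - {Min (unmatched_zeros v)} \<and>
    unmatched_ones w = insert (Min (unmatched_zeros v)) (unmatched_ones v)"
  using assms
proof (induction v arbitrary: w rule: rev_induct)
  case Nil
  then show ?case by (simp add: gk_up_def unmatched_zeros_def)
next
  case (snoc b x)
  let ?Z = "unmatched_zeros x"
  show ?case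
  proof (cases "\<not> b \<and> ?Z = {}")
    case True
    then show ?thesis using snoc.prems by (auto simp: gk_up_snoc_False unmatched_snoc)
  next
    case False
    then have "?Z \<noteq> {}"
      using snoc.prems by (cases b) (auto simp: gk_up_snoc_True)
    then obtain w0 where w0: "gk_up x = Some w0" by (simp add: gk_up_def)
    note IH = snoc.IH[OF w0]
    have lt: "Min ?Z < length x" using \<open>?Z \<noteq> {}\<close> by (rule Min_unmatched_zeros_less_length)
    show ?thesis
    proof (cases b)
      case False
      then have "w = w0 @ [False]" using snoc.prems w0 \<open>?Z \<noteq> {}\<close> by (simp add: gk_up_snoc_False)
      moreover have "Min (insert (length x) ?Z) = Min ?Z"
        using \<open>?Z \<noteq> {}\<close> by (intro Min_insert_greater) (auto dest: unmatched_zero_less_length)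
      ultimately show ?thesis using False IH lt length_gk_up[OF w0] by (auto simp: unmatched_snoc)
    next
      case True
      then have ne: "?Z - {Max ?Z} \<noteq> {}" using snoc.prems by (auto simp: gk_up_snoc_True split: if_splits)
      then have w: "w = w0 @ [True]" using snoc.prems True w0 by (simp add: gk_up_snoc_True)
      have lt': "Min ?Z < Max ?Z" using ne by (simp add: Min_less_Max)
      then have "Min (?Z - {Max ?Z}) = Min ?Z" and "Max (?Z - {Min ?Z}) = Max ?Z"
        using \<open>?Z \<noteq> {}\<close> by (auto intro!: Min_eqI Max_eqI Min_in Max_in)
      moreover have "Max ?Z \<in> unmatched_zeros w0" using IH lt' \<open>?Z \<noteq> {}\<close> by simp
      then have "unmatched_zeros w0 \<noteq> {}" by blast
      ultimately show ?thesis using True w IH by (auto simp: unmatched_snoc)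
    qed
  qed
qed

lemma gk_up_unmatched_nonempty:
  "gk_up x = Some y \<Longrightarrow> unmatched_zeros x \<noteq> {} \<and> unmatched_ones y \<noteq> {}"
  using gk_up_SomeD unmatched_gk_up by blast

lemma gk_up_snoc_True_Some:
  assumes "gk_up x = Some y" "unmatched_zeros y \<noteq> {}"
  shows "gk_up (x @ [True]) = Some (y @ [True])"
proof -
  let ?Z = "unmatched_zeros x"
  have "?Z - {Min ?Z} \<noteq> {}" using assms unmatched_gk_up by blast
  then obtain k where k: "k \<in> ?Z" "k \<noteq> Min ?Z" by auto
  then have "Min ?Z < k" by (simp add: order_le_neq_trans)
  also have "k \<le> Max ?Z" using k by simp
  moreover have "Min ?Z \<in> ?Z" using k Min_in[OF finite_unmatched_zeros, of x] by blast
  ultimately have "Min ?Z \<in> ?Z - {Max ?Z}" by auto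
  then show ?thesis using assms(1) by (auto simp: gk_up_snoc_True)
qed

lemma unmatched_zeros_gk_down:
  "gk_down v = Some w \<Longrightarrow> unmatched_zeros w = insert (Max (unmatched_ones v)) (unmatched_zeros v)"
proof (induction v arbitrary: w rule: rev_induct)
  case Nil
  then show ?case by (simp add: gk_down_def unmatched_ones_def)
next
  case (snoc b x)
  let ?O = "unmatched_ones x" and ?Z = "unmatched_zeros x"
  show ?case
  proof (cases "b \<and> ?Z = {}")
    case True
    have "\<forall>j\<in>?O. j < length x" by (auto dest: unmatched_one_less_length)
    then have "Max (insert (length x) ?O) = length x" by (intro Max_eqI) auto
    then show ?thesis using snoc.prems True by (auto simp: gk_down_def unmatched_snoc)
  next
    case False
    then have ne: "?O \<noteq> {}"
      using snoc.prems by (cases b) (simp_all add: gk_down_def unmatched_snoc split: if_splits)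
    then obtain w0 where w0: "gk_down x = Some w0" by (simp add: gk_down_def)
    have "Max ?O < length x" using ne by (auto dest: unmatched_one_less_length)
    then have w: "w = w0 @ [b]"
      using snoc.prems False ne w0 by (cases b) (auto simp: gk_down_def unmatched_snoc list_update_append1)
    note IH = snoc.IH[OF w0]
    show ?thesis
    proof (cases b)
      case True
      then have "?Z \<noteq> {}" using False by simp
      then have "Max ?O < Max ?Z"
        using Max_in[OF finite_unmatched_ones ne] Max_in[OF finite_unmatched_zeros]
        by (simp add: unmatched_one_less_unmatched_zero)
      then have "Max (insert (Max ?O) ?Z) = Max ?Z" using False True by (simp add: max_def)
      then show ?thesis using w IH True \<open>Max ?O < Max ?Z\<close> by (auto simp: unmatched_snoc)
    qed (use w IH length_gk_down[OF w0] in \<open>simp add: unmatched_snoc insert_commute\<close>)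
  qed
qed

lemma gk_down_imp_gk_up:
  assumes "gk_down v = Some w"
  shows "gk_up w = Some v"
proof -
  let ?j = "Max (unmatched_ones v)"
  have ne: "unmatched_ones v \<noteq> {}" using assms by (simp add: gk_down_def split: if_splits)
  then have j: "?j \<in> unmatched_ones v" by simp
  have w: "w = v[?j := False]" using assms ne by (simp add: gk_down_def)
  have Z: "unmatched_zeros w = insert ?j (unmatched_zeros v)" using unmatched_zeros_gk_down[OF assms] .
  then have "Min (unmatched_zeros w) = ?j"
    using j by (intro Min_eqI) (auto dest: unmatched_one_less_unmatched_zero)
  moreover have "v[?j := True] = v" using list_update_id[of v ?j] nth_unmatched_one[OF j] by simp
  ultimately show ?thesis using Z w by (simp add: gk_up_def)
qed

lemma gk_up_Cons_True: "gk_up (True # x) = map_option (Cons True) (gk_up x)"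
  by (simp add: gk_up_def unmatched_Cons_True Min_Suc_image)

lemma gk_up_Cons_False:
  "gk_up (False # x) =
     (if unmatched_ones x = {} then Some (True # x) else map_option (Cons False) (gk_up x))"
proof -
  have "Min (insert 0 (Suc ` unmatched_zeros x)) = 0" by (intro Min_eqI) auto
  then show ?thesis by (simp add: gk_up_def unmatched_Cons_False Min_Suc_image)
qed

definition hamming :: "'a list \<Rightarrow> 'a list \<Rightarrow> nat" where
  "hamming x y = length (filter (\<lambda>(a, b). a \<noteq> b) (zip x y))"

lemma cube_adj_iff_hamming: "cube_adj x y \<longleftrightarrow> length x = length y \<and> hamming x y = 1"
proof (cases "length x = length y")
  case True
  then have "hamming x y = card {i. i < length x \<and> x ! i \<noteq> y ! i}"
    unfolding hamming_def length_filter_conv_card by (intro arg_cong[where f = card]) auto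
  then show ?thesis using True by (simp add: cube_adj_def)
qed (simp add: cube_adj_def)

lemma hamming_append: "length x = length y \<Longrightarrow> hamming (x @ u) (y @ v) = hamming x y + hamming u v"
  by (simp add: hamming_def)

lemma hamming_eq_0_iff: "length x = length y \<Longrightarrow> hamming x y = 0 \<longleftrightarrow> x = y"
  by (induction x y rule: list_induct2) (auto simp: hamming_def)

lemma cube_adj_append:
  assumes "length x = length y"
  shows "cube_adj (x @ u) (y @ v) \<longleftrightarrow> x = y \<and> cube_adj u v \<or> cube_adj x y \<and> u = v"
proof (cases "length u = length v")
  case True
  have "cube_adj (x @ u) (y @ v) \<longleftrightarrow> hamming x y + hamming u v = 1"
    using assms True by (simp add: cube_adj_iff_hamming hamming_append)
  moreover have "x = y \<longleftrightarrow> hamming x y = 0" "u = v \<longleftrightarrow> hamming u v = 0"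
    using assms True by (simp_all add: hamming_eq_0_iff)
  moreover have "cube_adj x y \<longleftrightarrow> hamming x y = 1" "cube_adj u v \<longleftrightarrow> hamming u v = 1"
    using assms True by (simp_all add: cube_adj_iff_hamming)
  ultimately show ?thesis by linarith
next
  case False
  then show ?thesis using assms by (auto simp: cube_adj_def)
qed

lemma cube_adj_irrefl [simp]: "\<not> cube_adj x x"
  by (simp add: cube_adj_def)

lemma cube_adj_sym: "cube_adj x y \<Longrightarrow> cube_adj y x"
  by (simp add: cube_adj_def eq_commute)

lemma symp_cube_adj: "symp cube_adj"
  by (auto intro: sympI cube_adj_sym)

lemma cube_adj_append_same [simp]: "cube_adj (x @ u) (y @ u) \<longleftrightarrow> cube_adj x y"
proof (cases "length x = length y")
  case False
  then show ?thesis by (simp add: cube_adj_def)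
qed (simp add: cube_adj_append)

lemma cube_adj_same_append [simp]: "cube_adj (x @ u) (x @ v) \<longleftrightarrow> cube_adj u v"
  by (simp add: cube_adj_append)

lemma cube_adj_Cons_Cons [simp]: "cube_adj (a # x) (b # y) \<longleftrightarrow> (if a = b then cube_adj x y else x = y)"
proof -
  have "cube_adj [a] [b] \<longleftrightarrow> a \<noteq> b" by (simp add: cube_adj_iff_hamming hamming_def)
  then show ?thesis using cube_adj_append[of "[a]" "[b]" x y] by auto
qed

lemma gk_up_cube_adj: "gk_up x = Some y \<Longrightarrow> cube_adj x y"
proof -
  assume up: "gk_up x = Some y"
  let ?j = "Min (unmatched_zeros x)"
  have ne: "unmatched_zeros x \<noteq> {}" and y: "y = x[?j := True]" using gk_up_SomeD[OF up] by auto
  have "?j < length x" "\<not> x ! ?j"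
    using Min_in[OF finite_unmatched_zeros ne] unmatched_zero_less_length nth_unmatched_zero by auto
  then have "{i. i < length x \<and> x ! i \<noteq> y ! i} = {?j}" by (auto simp: y nth_list_update)
  then show ?thesis by (simp add: cube_adj_def y)
qed

lemma card_cube_vertices: "card (cube_vertices n) = 2 ^ n"
proof -
  have "cube_vertices n = {xs. set xs \<subseteq> (UNIV :: bool set) \<and> length xs = n}"
    by (auto simp: cube_vertices_def)
  then show ?thesis using card_lists_length_eq[of "UNIV :: bool set" n] by simp
qed

section \<open>Chains\<close>

text \<open>A whole chain of the decomposition of \<open>Q\<^sub>m\<close>, listed from its bottom, where \<open>gk_down\<close> stops
  because there is no unmatched one, to its top.\<close>

definition gk_chain :: "nat \<Rightarrow> bool list list \<Rightarrow> bool" where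
  "gk_chain m c \<longleftrightarrow> c \<noteq> [] \<and> (\<forall>v\<in>set c. length v = m) \<and>
     unmatched_ones (hd c) = {} \<and> unmatched_zeros (last c) = {} \<and>
     successively (\<lambda>x y. gk_up x = Some y) c"

lemma gk_chain_nonempty: "gk_chain m c \<Longrightarrow> c \<noteq> []"
  by (simp add: gk_chain_def)

lemma gk_chain_nth: "gk_chain m c \<Longrightarrow> Suc i < length c \<Longrightarrow> gk_up (c ! i) = Some (c ! Suc i)"
  unfolding gk_chain_def by (blast dest: successively_nth)

lemma gk_chain_cube_adj: "gk_chain m c \<Longrightarrow> successively cube_adj c"
  unfolding gk_chain_def by (auto elim: successively_mono intro: gk_up_cube_adj)

lemma rel_path_gk_chain: "gk_chain m c \<Longrightarrow> rel_path cube_adj c (hd c) (last c)"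
  by (simp add: rel_path_def gk_chain_nonempty gk_chain_cube_adj)

lemma gk_chain_hd_step: "gk_chain m c \<Longrightarrow> 2 \<le> length c \<Longrightarrow> gk_up (hd c) = Some (hd (tl c))"
  by (cases c; cases "tl c") (auto simp: gk_chain_def)

lemma gk_chain_last_step:
  "gk_chain m c \<Longrightarrow> 2 \<le> length c \<Longrightarrow> gk_up (last (butlast c)) = Some (last c)"
  by (cases c rule: rev_cases; cases "butlast c" rule: rev_cases)
    (auto simp: gk_chain_def successively_append_iff butlast_append)

lemma length_gk_up_path:
  "successively (\<lambda>x y. gk_up x = Some y) c \<Longrightarrow> c \<noteq> [] \<Longrightarrow> unmatched_zeros (last c) = {} \<Longrightarrow>
   length c = Suc (card (unmatched_zeros (hd c)))"
proof (induction c)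
  case (Cons x c)
  show ?case
  proof (cases c)
    case (Cons y d)
    have up: "gk_up x = Some y" using Cons.prems \<open>c = y # d\<close> by simp
    have "card (unmatched_zeros y) = card (unmatched_zeros x) - 1" "unmatched_zeros x \<noteq> {}"
      using unmatched_gk_up[OF up] gk_up_unmatched_nonempty[OF up] by simp_all
    moreover have "length c = Suc (card (unmatched_zeros y))"
      using Cons.IH Cons.prems \<open>c = y # d\<close> by simp
    ultimately show ?thesis using \<open>c = y # d\<close> by (simp add: card_gt_0_iff)
  qed (use Cons.prems in simp)
qed simp

lemma gk_chain_length: "gk_chain m c \<Longrightarrow> length c = Suc (card (unmatched_zeros (hd c)))"
  by (simp add: gk_chain_def length_gk_up_path)

lemma gk_chain_length_parity: "gk_chain m c \<Longrightarrow> odd (length c) \<longleftrightarrow> even m"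
  using even_card_unmatched[of "hd c"] gk_chain_length[of m c] by (simp add: gk_chain_def)

lemma length_gk_chain_even:
  assumes "gk_chain m c" "even m"
  obtains "length c = 1" | "3 \<le> length c"
proof -
  have "odd (length c)" using gk_chain_length_parity[OF assms(1)] assms(2) by simp
  then have "length c = 1 \<or> 3 \<le> length c" by presburger
  then show thesis using that by blast
qed

lemma length_gk_chain_odd:
  assumes "gk_chain m c" "odd m"
  shows "2 \<le> length c"
proof -
  have "even (length c)" "length c \<noteq> 0"
    using gk_chain_length_parity[OF assms(1)] gk_chain_nonempty[OF assms(1)] assms(2) by auto
  then show ?thesis by presburger
qed

text \<open>The recursive structure of the Greene--Kleitman decomposition: appending (or prepending) a
  bit splits each chain of \<open>Q\<^sub>m\<close> into a chain of \<open>Q\<^sub>m\<^sub>+\<^sub>1\<close> that is one vertex longer and one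
  that is one vertex shorter.\<close>

definition snoc_grow :: "bool list list \<Rightarrow> bool list list" where
  "snoc_grow c = map (\<lambda>v. v @ [False]) c @ [last c @ [True]]"

definition snoc_shrink :: "bool list list \<Rightarrow> bool list list" where
  "snoc_shrink c = map (\<lambda>v. v @ [True]) (butlast c)"

definition cons_grow :: "bool list list \<Rightarrow> bool list list" where
  "cons_grow c = (False # hd c) # map (Cons True) c"

definition cons_shrink :: "bool list list \<Rightarrow> bool list list" where
  "cons_shrink c = map (Cons False) (tl c)"

lemma length_grow_shrink [simp]:
  "length (snoc_grow c) = Suc (length c)" "length (snoc_shrink c) = length c - 1"
  "length (cons_grow c) = Suc (length c)" "length (cons_shrink c) = length c - 1"
  by (simp_all add: snoc_grow_def snoc_shrink_def cons_grow_def cons_shrink_def)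

lemma snoc_grow_neq_Nil [simp]: "snoc_grow c \<noteq> []"
  by (simp add: snoc_grow_def)

lemma snoc_shrink_eq_Nil_iff: "snoc_shrink c = [] \<longleftrightarrow> length c \<le> 1"
  by (auto simp: snoc_shrink_def le_Suc_eq length_0_conv[symmetric] simp del: length_0_conv)

lemma set_snoc_grow_shrink:
  "c \<noteq> [] \<Longrightarrow> set (snoc_grow c) \<union> set (snoc_shrink c) = {v @ [b] | v b. v \<in> set c}"
  by (cases c rule: rev_cases) (auto simp: snoc_grow_def snoc_shrink_def)

lemma set_cons_grow_shrink:
  "c \<noteq> [] \<Longrightarrow> set (cons_grow c) \<union> set (cons_shrink c) = {b # v | v b. v \<in> set c}"
  by (cases c) (auto simp: cons_grow_def cons_shrink_def)

lemma ends_grow_shrink: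
  "c \<noteq> [] \<Longrightarrow> hd (snoc_grow c) = hd c @ [False]" "last (snoc_grow c) = last c @ [True]"
  "2 \<le> length c \<Longrightarrow> hd (snoc_shrink c) = hd c @ [True]"
  "2 \<le> length c \<Longrightarrow> last (snoc_shrink c) = last (butlast c) @ [True]"
  "hd (cons_grow c) = False # hd c" "c \<noteq> [] \<Longrightarrow> last (cons_grow c) = True # last c"
  "2 \<le> length c \<Longrightarrow> hd (cons_shrink c) = False # hd (tl c)"
  "2 \<le> length c \<Longrightarrow> last (cons_shrink c) = False # last c"
  by (cases c; cases "tl c"; auto simp: snoc_grow_def snoc_shrink_def cons_grow_def cons_shrink_def
      hd_map last_map)+

lemma gk_chain_snoc_grow:
  assumes "gk_chain m c"
  shows "gk_chain (Suc m) (snoc_grow c)"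
proof -
  have "successively (\<lambda>x y. gk_up x = Some y) (map (\<lambda>v. v @ [False]) c)"
    using assms unfolding gk_chain_def successively_map
    by (auto elim!: successively_mono dest: gk_up_unmatched_nonempty simp: gk_up_snoc_False)
  then show ?thesis
    using assms by (auto simp: gk_chain_def snoc_grow_def successively_append_iff gk_up_snoc_False
        unmatched_snoc last_map hd_map)
qed

lemma gk_chain_snoc_shrink:
  assumes "gk_chain m c" "2 \<le> length c"
  shows "gk_chain (Suc m) (snoc_shrink c)"
proof -
  have nth: "snoc_shrink c ! j = c ! j @ [True]" if "j < length c - 1" for j
    using that by (simp add: snoc_shrink_def nth_butlast)
  have "successively (\<lambda>x y. gk_up x = Some y) (snoc_shrink c)"
  proof (unfold successively_conv_nth, intro allI impI)
    fix i assume "Suc i < length (snoc_shrink c)"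
    then have i: "Suc i < length c - 1" by simp
    then have "gk_up (c ! i) = Some (c ! Suc i)" "unmatched_zeros (c ! Suc i) \<noteq> {}"
      using gk_chain_nth[OF assms(1)] gk_up_unmatched_nonempty by auto
    then show "gk_up (snoc_shrink c ! i) = Some (snoc_shrink c ! Suc i)"
      using i nth[of i] nth[of "Suc i"] by (simp add: gk_up_snoc_True_Some)
  qed
  moreover have "unmatched_zeros (hd c) \<noteq> {}"
    using gk_up_unmatched_nonempty[OF gk_chain_hd_step[OF assms]] by blast
  moreover obtain a where "unmatched_zeros (last (butlast c)) = {a}"
  proof -
    note up = gk_chain_last_step[OF assms]
    have "unmatched_zeros (last (butlast c)) \<subseteq> {Min (unmatched_zeros (last (butlast c)))}"
      using assms(1) unmatched_gk_up[OF up] by (simp add: gk_chain_def)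
    then show ?thesis using that gk_up_unmatched_nonempty[OF up] by (auto simp: subset_singleton_iff)
  qed
  moreover have "\<forall>v\<in>set (snoc_shrink c). length v = Suc m"
    using assms(1) by (auto simp: gk_chain_def snoc_shrink_def dest: in_set_butlastD)
  ultimately show ?thesis
    using assms unfolding gk_chain_def
    by (simp add: ends_grow_shrink unmatched_snoc snoc_shrink_eq_Nil_iff)
qed

lemma gk_chain_cons_grow:
  assumes "gk_chain m c"
  shows "gk_chain (Suc m) (cons_grow c)"
proof -
  have "successively (\<lambda>x y. gk_up x = Some y) (map (Cons True) c)"
    using assms unfolding gk_chain_def successively_map
    by (auto elim!: successively_mono simp: gk_up_Cons_True)
  then show ?thesis
    using assms by (auto simp: gk_chain_def cons_grow_def successively_Cons gk_up_Cons_False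
        unmatched_Cons_False unmatched_Cons_True last_map hd_map)
qed

lemma gk_chain_cons_shrink:
  assumes "gk_chain m c" "2 \<le> length c"
  shows "gk_chain (Suc m) (cons_shrink c)"
proof -
  have nth: "cons_shrink c ! j = False # c ! Suc j" if "j < length c - 1" for j
    using that by (simp add: cons_shrink_def nth_tl)
  have "successively (\<lambda>x y. gk_up x = Some y) (cons_shrink c)"
  proof (unfold successively_conv_nth, intro allI impI)
    fix i assume "Suc i < length (cons_shrink c)"
    then have i: "Suc i < length c - 1" by simp
    then have "gk_up (c ! i) = Some (c ! Suc i)" "gk_up (c ! Suc i) = Some (c ! Suc (Suc i))"
      using gk_chain_nth[OF assms(1)] by simp_all
    then show "gk_up (cons_shrink c ! i) = Some (cons_shrink c ! Suc i)"
      using i nth[of i] nth[of "Suc i"] gk_up_unmatched_nonempty by (simp add: gk_up_Cons_False)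
  qed
  moreover have "unmatched_ones (hd (tl c)) = {Min (unmatched_zeros (hd c))}"
    using assms(1) unmatched_gk_up[OF gk_chain_hd_step[OF assms]] by (simp add: gk_chain_def)
  moreover have "unmatched_ones (last c) \<noteq> {}"
    using gk_up_unmatched_nonempty[OF gk_chain_last_step[OF assms]] by blast
  moreover have "\<forall>v\<in>set (cons_shrink c). length v = Suc m"
    using assms(1) by (auto simp: gk_chain_def cons_shrink_def dest: list.set_sel(2))
  ultimately show ?thesis
    using assms unfolding gk_chain_def
    by (simp add: ends_grow_shrink unmatched_Cons_False cons_shrink_def[symmetric] flip: length_greater_0_conv)
qed

definition ham_path :: "nat \<Rightarrow> bool list list \<Rightarrow> bool" where
  "ham_path n P \<longleftrightarrow> distinct P \<and> set P = cube_vertices n \<and> successively cube_adj P"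

definition gk_chain_path :: "nat \<Rightarrow> (bool \<times> bool list list) list \<Rightarrow> bool" where
  "gk_chain_path m ds \<longleftrightarrow> (\<forall>(q, c)\<in>set ds. gk_chain m c) \<and> ham_path m (trail ds)"

lemma length_ham_path: "ham_path n P \<Longrightarrow> length P = 2 ^ n"
  by (metis card_cube_vertices distinct_card ham_path_def)

lemma gk_chain_path_nonempty:
  assumes "gk_chain_path m ds"
  shows "ds \<noteq> []"
proof -
  have "replicate m False \<in> set (trail ds)"
    using assms by (simp add: gk_chain_path_def ham_path_def cube_vertices_def)
  then show ?thesis by auto
qed

lemma vertices_lift_walk:
  fixes ext :: "bool list \<Rightarrow> bool \<Rightarrow> bool \<Rightarrow> bool list"
  assumes walk: "gk_chain_path m ds"
    and lifted_chains: "\<forall>(p, d)\<in>set (lift_walk out back ds). gk_chain (Suc (Suc m)) d"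
    and cover: "\<And>c v a b. gk_chain m c \<Longrightarrow> v \<in> set c \<Longrightarrow> ext v a b \<in> set (out c) \<union> set (trail (back c))"
    and ext: "\<And>w. length w = Suc (Suc m) \<Longrightarrow> \<exists>v a b. length v = m \<and> w = ext v a b"
    and count: "\<And>c. gk_chain m c \<Longrightarrow> length (out c) + length (trail (back c)) = 4 * length c"
  defines "T \<equiv> trail (lift_walk out back ds)"
  shows "distinct T \<and> set T = cube_vertices (Suc (Suc m))"
proof -
  have chains: "\<forall>(q, c)\<in>set ds. gk_chain m c" and P: "ham_path m (trail ds)"
    using walk by (simp_all add: gk_chain_path_def)
  have "set T \<subseteq> cube_vertices (Suc (Suc m))"
    using lifted_chains by (fastforce simp: T_def set_trail cube_vertices_def gk_chain_def)
  moreover have "cube_vertices (Suc (Suc m)) \<subseteq> set T"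
  proof
    fix w assume "w \<in> cube_vertices (Suc (Suc m))"
    then have "length w = Suc (Suc m)" by (simp add: cube_vertices_def)
    then obtain v a b where v: "length v = m" "w = ext v a b" using ext by blast
    then have "v \<in> set (trail ds)" using P by (simp add: ham_path_def cube_vertices_def)
    then obtain q c where qc: "(q, c) \<in> set ds" "v \<in> set c" by (auto simp: set_trail)
    then have "w \<in> set (out c) \<union> set (trail (back c))" using cover chains v(2) by blast
    then show "w \<in> set T" using qc(1) unfolding T_def set_trail_lift_walk by blast
  qed
  moreover have "length T = 4 * length (trail ds)"
  proof -
    have "(\<Sum>(q, c)\<leftarrow>ds. length (out c) + length (trail (back c))) = (\<Sum>(q, c)\<leftarrow>ds. 4 * length c)"
      using chains count by (intro arg_cong[where f = sum_list] map_cong) auto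
    then show ?thesis
      unfolding T_def length_trail_lift_walk by (simp add: length_trail split_def sum_list_const_mult)
  qed
  ultimately show ?thesis
    using length_ham_path[OF P] by (auto simp: card_cube_vertices intro!: card_distinct)
qed

lemma rel_path_lift_walk:
  fixes f :: "bool \<Rightarrow> bool list \<Rightarrow> bool list" and g :: "bool list \<Rightarrow> bool list"
  assumes walk: "gk_chain_path m ds"
    and out_chain: "\<And>c. gk_chain m c \<Longrightarrow>
      gk_chain (Suc (Suc m)) (out c) \<and> hd (out c) = f True (hd c) \<and> last (out c) = f False (last c)"
    and back_path: "\<And>c. gk_chain m c \<Longrightarrow> rel_path cube_adj (trail (back c)) (g (hd c)) (g (last c))"
    and turns: "successively (\<lambda>(p, _) (q, _). f (\<not> p) = f q) ds"
    and f: "\<And>q x y. cube_adj x y \<Longrightarrow> cube_adj (f q x) (f q y)"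
    and g: "\<And>x y. cube_adj x y \<Longrightarrow> cube_adj (g x) (g y)"
    and fg: "\<And>q x. cube_adj (f q x) (g x)"
  shows "rel_path cube_adj (trail (lift_walk out back ds)) (f (fst (hd ds)) (hd (trail ds))) (g (hd (trail ds)))"
proof -
  have chains: "\<forall>(q, c)\<in>set ds. gk_chain m c" and path: "successively cube_adj (trail ds)"
    using walk by (simp_all add: gk_chain_path_def ham_path_def)
  have ne: "ds \<noteq> []" using walk by (rule gk_chain_path_nonempty)
  have "c \<noteq> [] \<and> rel_path cube_adj (out c) (f True (hd c)) (f False (last c))" if "c \<in> snd ` set ds" for c
  proof -
    have gc: "gk_chain m c" using that chains by auto
    then have oc: "gk_chain (Suc (Suc m)) (out c)" using out_chain by blast
    then show ?thesis using out_chain[OF gc] rel_path_gk_chain[OF oc] gk_chain_nonempty[OF gc] by simp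
  qed
  note out_part = rel_path_trail_map[OF symp_cube_adj path ne this f turns]
  have "c \<noteq> [] \<and> rel_path cube_adj (trail (back c)) (g (hd c)) (g (last c))" if "c \<in> snd ` set ds" for c
    using that chains back_path gk_chain_nonempty by auto
  moreover have "successively (\<lambda>(p, _) (q, _). (\<lambda>_. g) (\<not> p) = (\<lambda>_ :: bool. g) q) ds"
    by (simp add: successively_conv_nth split_def)
  ultimately have back_part: "rel_path cube_adj (trail (map (apsnd (\<lambda>c. trail (back c))) ds))
      (g (hd (trail ds))) (g (last (trail ds)))"
    using rel_path_trail_map[where e = "\<lambda>_. g", OF symp_cube_adj path ne _ g] by simp
  show ?thesis
    unfolding trail_lift_walk using rel_path_append[OF out_part rel_path_rev[OF symp_cube_adj back_part] fg] .
qed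

lemma gk_chain_path_lift_walk:
  fixes f :: "bool \<Rightarrow> bool list \<Rightarrow> bool list" and g :: "bool list \<Rightarrow> bool list"
    and ext :: "bool list \<Rightarrow> bool \<Rightarrow> bool \<Rightarrow> bool list"
  assumes walk: "gk_chain_path m ds"
    and out_chain: "\<And>c. gk_chain m c \<Longrightarrow>
      gk_chain (Suc (Suc m)) (out c) \<and> hd (out c) = f True (hd c) \<and> last (out c) = f False (last c)"
    and back_chain: "\<And>c. gk_chain m c \<Longrightarrow> (\<forall>(p, d)\<in>set (back c). gk_chain (Suc (Suc m)) d) \<and>
      rel_path cube_adj (trail (back c)) (g (hd c)) (g (last c))"
    and turns: "successively (\<lambda>(p, _) (q, _). f (\<not> p) = f q) ds"
    and f: "\<And>q x y. cube_adj x y \<Longrightarrow> cube_adj (f q x) (f q y)"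
    and g: "\<And>x y. cube_adj x y \<Longrightarrow> cube_adj (g x) (g y)"
    and fg: "\<And>q x. cube_adj (f q x) (g x)"
    and cover: "\<And>c v a b. gk_chain m c \<Longrightarrow> v \<in> set c \<Longrightarrow> ext v a b \<in> set (out c) \<union> set (trail (back c))"
    and ext: "\<And>w. length w = Suc (Suc m) \<Longrightarrow> \<exists>v a b. length v = m \<and> w = ext v a b"
    and count: "\<And>c. gk_chain m c \<Longrightarrow> length (out c) + length (trail (back c)) = 4 * length c"
  defines "ds' \<equiv> lift_walk out back ds"
  shows "gk_chain_path (Suc (Suc m)) ds' \<and> cube_adj (last (trail ds')) (hd (trail ds'))"
proof -
  have "\<forall>(q, c)\<in>set ds. gk_chain m c" using walk by (simp add: gk_chain_path_def)
  then have lifted_chains: "\<forall>(p, d)\<in>set ds'. gk_chain (Suc (Suc m)) d"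
    using out_chain back_chain by (fastforce simp: ds'_def elim: mem_lift_walk)
  moreover have "distinct (trail ds') \<and> set (trail ds') = cube_vertices (Suc (Suc m))"
    unfolding ds'_def using walk lifted_chains[unfolded ds'_def] cover ext count by (rule vertices_lift_walk)
  moreover have "rel_path cube_adj (trail ds') (f (fst (hd ds)) (hd (trail ds))) (g (hd (trail ds)))"
  proof -
    have "\<And>c. gk_chain m c \<Longrightarrow> rel_path cube_adj (trail (back c)) (g (hd c)) (g (last c))"
      using back_chain by blast
    then show ?thesis using rel_path_lift_walk[OF walk out_chain _ turns f g fg] by (simp add: ds'_def)
  qed
  ultimately show ?thesis
    using cube_adj_sym[OF fg] by (simp add: gk_chain_path_def ham_path_def rel_path_def)
qed

section \<open>Adding two bits\<close>

text \<open>For even \<open>m\<close> a bit is added at each end. A chain \<open>c = (c\<^sub>1, \<dots>, c\<^sub>k)\<close> yields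
  \<open>(0c\<^sub>10, 1c\<^sub>10, \<dots>, 1c\<^sub>k0, 1c\<^sub>k1)\<close>, which is traversed in the direction of \<open>c\<close>, and
  the return path \<open>(0c\<^sub>11, 1c\<^sub>11, \<dots>, 1c\<^sub>k\<^sub>-\<^sub>11)\<close>, \<open>(0c\<^sub>k\<^sub>-\<^sub>11, \<dots>, 0c\<^sub>21)\<close>,
  \<open>(0c\<^sub>20, \<dots>, 0c\<^sub>k0, 0c\<^sub>k1)\<close> from \<open>0c\<^sub>11\<close> to \<open>0c\<^sub>k1\<close>, which for \<open>k = 1\<close> is just \<open>(0c\<^sub>11)\<close>.\<close>

definition frame_out :: "bool list list \<Rightarrow> bool list list" where
  "frame_out c = cons_grow (snoc_grow c)"

definition frame_back :: "bool list list \<Rightarrow> (bool \<times> bool list list) list" where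
  "frame_back c = (if length c = 1 then [(True, cons_shrink (snoc_grow c))]
     else [(True, cons_grow (snoc_shrink c)), (False, cons_shrink (snoc_shrink c)),
       (True, cons_shrink (snoc_grow c))])"

lemma frame_out_chain:
  "gk_chain m c \<Longrightarrow> gk_chain (Suc (Suc m)) (frame_out c) \<and>
     hd (frame_out c) = False # hd c @ [False] \<and> last (frame_out c) = True # last c @ [True]"
  by (simp add: frame_out_def gk_chain_cons_grow gk_chain_snoc_grow ends_grow_shrink gk_chain_nonempty)

lemma frame_back_chain:
  assumes "gk_chain m c" "even m"
  shows "(\<forall>(p, d)\<in>set (frame_back c). gk_chain (Suc (Suc m)) d) \<and>
    rel_path cube_adj (trail (frame_back c)) (False # hd c @ [True]) (False # last c @ [True])"
  using assms
proof (cases rule: length_gk_chain_even)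
  case 1
  then obtain v where "c = [v]" by (cases c) auto
  then show ?thesis
    using gk_chain_cons_shrink[OF gk_chain_snoc_grow[OF assms(1)]]
    by (simp add: frame_back_def rel_path_def snoc_grow_def cons_shrink_def)
next
  case 2
  let ?D = "cons_grow (snoc_shrink c)" and ?E = "cons_shrink (snoc_shrink c)"
    and ?B = "cons_shrink (snoc_grow c)"
  have S: "gk_chain (Suc m) (snoc_shrink c)" using 2 assms(1) by (intro gk_chain_snoc_shrink) auto
  have chains: "gk_chain (Suc (Suc m)) ?D" "gk_chain (Suc (Suc m)) ?E" "gk_chain (Suc (Suc m)) ?B"
    using 2 gk_chain_cons_grow[OF S] gk_chain_cons_shrink[OF S]
      gk_chain_cons_shrink[OF gk_chain_snoc_grow[OF assms(1)]] by auto
  obtain x y r where c: "c = x # y # r" "r \<noteq> []" using 2 by (cases c; cases "tl c"; cases "tl (tl c)") auto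
  have sym: "symp cube_adj" by (auto intro: sympI cube_adj_sym)
  let ?l = "last (butlast c)"
  have D: "rel_path cube_adj ?D (False # hd c @ [True]) (True # ?l @ [True])"
    using rel_path_gk_chain[OF chains(1)] 2 by (simp add: ends_grow_shrink snoc_shrink_eq_Nil_iff)
  have E: "rel_path cube_adj (rev ?E) (False # ?l @ [True]) (False # y @ [True])"
  proof -
    have "hd (tl (snoc_shrink c)) = y @ [True]" using c by (simp add: snoc_shrink_def)
    then show ?thesis using rel_path_rev[OF sym rel_path_gk_chain[OF chains(2)]] 2
      by (simp add: ends_grow_shrink)
  qed
  have B: "rel_path cube_adj ?B (False # y @ [False]) (False # last c @ [True])"
  proof -
    have "hd (tl (snoc_grow c)) = y @ [False]" using c by (simp add: snoc_grow_def)
    then show ?thesis using rel_path_gk_chain[OF chains(3)] 2 by (simp add: ends_grow_shrink)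
  qed
  have "rel_path cube_adj (?D @ rev ?E @ ?B) (False # hd c @ [True]) (False # last c @ [True])"
    using rel_path_append[OF D rel_path_append[OF E B]] by simp
  then show ?thesis using 2 chains by (simp add: frame_back_def)
qed

lemma frame_cover:
  assumes "gk_chain m c" "even m"
  shows "set (frame_out c) \<union> set (trail (frame_back c)) = {a # v @ [b] | a v b. v \<in> set c}"
proof -
  let ?X = "snoc_grow c" and ?Y = "snoc_shrink c"
  have "set (frame_out c) \<union> set (trail (frame_back c)) = {a # w | a w. w \<in> set ?X \<union> set ?Y}"
    using assms
  proof (cases rule: length_gk_chain_even)
    case 1
    then have "?Y = []" by (simp add: snoc_shrink_eq_Nil_iff)
    moreover have "set (frame_out c) \<union> set (trail (frame_back c)) = set (cons_grow ?X) \<union> set (cons_shrink ?X)"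
      using 1 by (simp add: frame_out_def frame_back_def)
    ultimately show ?thesis unfolding set_cons_grow_shrink[OF snoc_grow_neq_Nil] by auto
  next
    case 2
    then have Y: "?Y \<noteq> []" by (simp add: snoc_shrink_eq_Nil_iff)
    have "set (frame_out c) \<union> set (trail (frame_back c)) =
        (set (cons_grow ?X) \<union> set (cons_shrink ?X)) \<union> (set (cons_grow ?Y) \<union> set (cons_shrink ?Y))"
      using 2 by (auto simp: frame_out_def frame_back_def)
    also have "\<dots> = {a # w | a w. w \<in> set ?X \<union> set ?Y}"
      unfolding set_cons_grow_shrink[OF snoc_grow_neq_Nil] set_cons_grow_shrink[OF Y] by auto
    finally show ?thesis .
  qed
  also have "\<dots> = {a # v @ [b] | a v b. v \<in> set c}"
    unfolding set_snoc_grow_shrink[OF gk_chain_nonempty[OF assms(1)]] by blast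
  finally show ?thesis .
qed

lemma frame_count:
  assumes "gk_chain m c" "even m"
  shows "length (frame_out c) + length (trail (frame_back c)) = 4 * length c"
  using assms by (cases rule: length_gk_chain_even) (auto simp: frame_out_def frame_back_def)

lemma gk_chain_path_frame_step:
  assumes "even m" "gk_chain_path m ds" "distinct_adj (map fst ds)"
  defines "ds' \<equiv> lift_walk frame_out frame_back ds"
  shows "gk_chain_path (Suc (Suc m)) ds' \<and> distinct_adj (map fst ds') \<and>
    cube_adj (last (trail ds')) (hd (trail ds'))"
proof -
  have chains: "gk_chain m c" if "c \<in> snd ` set ds" for c
    using that assms(2) by (auto simp: gk_chain_path_def)
  have "successively (\<lambda>(p, _) (q, _). (\<lambda>q v. (\<not> q) # v @ [\<not> q]) (\<not> p) = (\<lambda>q v. (\<not> q) # v @ [\<not> q]) q) ds"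
    using assms(3) by (auto simp: distinct_adj_def successively_map split_def elim!: successively_mono)
  moreover have "\<exists>v a b. length v = m \<and> w = a # v @ [b]" if len: "length w = Suc (Suc m)" for w :: "bool list"
  proof -
    obtain a u where w: "w = a # u" and "u \<noteq> []" using len by (cases w) (auto simp flip: length_greater_0_conv)
    then have "w = a # butlast u @ [last u]" by simp
    then show ?thesis using len w by (intro exI[of _ "butlast u"] exI[of _ a] exI[of _ "last u"]) simp
  qed
  ultimately have "gk_chain_path (Suc (Suc m)) ds' \<and> cube_adj (last (trail ds')) (hd (trail ds'))"
    unfolding ds'_def
    using assms(1,2) frame_out_chain frame_back_chain frame_count frame_cover
    by (intro gk_chain_path_lift_walk[where f = "\<lambda>q v. (\<not> q) # v @ [\<not> q]" and g = "\<lambda>v. False # v @ [True]"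
          and ext = "\<lambda>v a b. a # v @ [b]"]) auto
  moreover have "distinct_adj (map fst ds')"
    unfolding ds'_def using assms(3) by (rule alternating_lift_walk) (simp add: frame_back_def rel_path_def)
  ultimately show ?thesis by simp
qed

text \<open>For odd \<open>m\<close> two bits are appended. A chain \<open>c = (c\<^sub>1, \<dots>, c\<^sub>k)\<close> yields
  \<open>(c\<^sub>101, \<dots>, c\<^sub>k01)\<close> and the return path \<open>(c\<^sub>111, \<dots>, c\<^sub>k\<^sub>-\<^sub>211)\<close>,
  \<open>(c\<^sub>k\<^sub>-\<^sub>111, c\<^sub>k\<^sub>-\<^sub>110, \<dots>, c\<^sub>110)\<close>, \<open>(c\<^sub>100, \<dots>, c\<^sub>k00, c\<^sub>k10, c\<^sub>k11)\<close>,
  whose first chain is empty when \<open>k = 2\<close>.\<close>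

definition suffix_out :: "bool list list \<Rightarrow> bool list list" where
  "suffix_out c = snoc_shrink (snoc_grow c)"

definition suffix_back :: "bool list list \<Rightarrow> (bool \<times> bool list list) list" where
  "suffix_back c = (if length c = 2 then [] else [(True, snoc_shrink (snoc_shrink c))]) @
     [(False, snoc_grow (snoc_shrink c)), (True, snoc_grow (snoc_grow c))]"

lemma suffix_out_eq: "suffix_out c = map (\<lambda>v. v @ [False, True]) c"
  by (simp add: suffix_out_def snoc_shrink_def snoc_grow_def)

lemma suffix_out_chain:
  assumes "gk_chain m c"
  shows "gk_chain (Suc (Suc m)) (suffix_out c) \<and>
    hd (suffix_out c) = hd c @ [False, True] \<and> last (suffix_out c) = last c @ [False, True]"
proof -
  have "2 \<le> length (snoc_grow c)" using gk_chain_nonempty[OF assms] by (cases c) auto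
  then show ?thesis using gk_chain_snoc_shrink[OF gk_chain_snoc_grow[OF assms]] gk_chain_nonempty[OF assms]
    by (simp add: suffix_out_def[symmetric] suffix_out_eq hd_map last_map)
qed

lemma suffix_back_chain:
  assumes "gk_chain m c" "odd m"
  shows "(\<forall>(p, d)\<in>set (suffix_back c). gk_chain (Suc (Suc m)) d) \<and>
    rel_path cube_adj (trail (suffix_back c)) (hd c @ [True, True]) (last c @ [True, True])"
proof -
  have sym: "symp cube_adj" by (auto intro: sympI cube_adj_sym)
  have len: "2 \<le> length c" using assms by (rule length_gk_chain_odd)
  let ?E = "snoc_shrink (snoc_shrink c)" and ?D = "snoc_grow (snoc_shrink c)"
    and ?A = "snoc_grow (snoc_grow c)"
  have S: "gk_chain (Suc m) (snoc_shrink c)" using assms(1) len by (rule gk_chain_snoc_shrink)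
  have D: "gk_chain (Suc (Suc m)) ?D" "rel_path cube_adj (rev ?D) (last (butlast c) @ [True, True]) (hd c @ [True, False])"
    using gk_chain_snoc_grow[OF S] rel_path_rev[OF sym rel_path_gk_chain[OF gk_chain_snoc_grow[OF S]]] len
    by (simp_all add: ends_grow_shrink snoc_shrink_eq_Nil_iff)
  have A: "gk_chain (Suc (Suc m)) ?A" "rel_path cube_adj ?A (hd c @ [False, False]) (last c @ [True, True])"
    using gk_chain_snoc_grow[OF gk_chain_snoc_grow[OF assms(1)]]
      rel_path_gk_chain[OF gk_chain_snoc_grow[OF gk_chain_snoc_grow[OF assms(1)]]] gk_chain_nonempty[OF assms(1)]
    by (simp_all add: ends_grow_shrink)
  have DA: "rel_path cube_adj (rev ?D @ ?A) (last (butlast c) @ [True, True]) (last c @ [True, True])"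
    using rel_path_append[OF D(2) A(2)] by simp
  show ?thesis
  proof (cases "length c = 2")
    case True
    then have "last (butlast c) = hd c" by (cases c; cases "tl c") auto
    then show ?thesis using True D A DA by (simp add: suffix_back_def)
  next
    case False
    then obtain z y x q where "rev c = z # y # x # q" using len
      by (cases "rev c"; cases "tl (rev c)"; cases "tl (tl (rev c))") auto
    then have c: "c = rev q @ [x, y, z]" by (simp add: rev_swap)
    have "gk_up x = Some y" using assms(1) by (simp add: gk_chain_def c successively_append_iff)
    then have "cube_adj (x @ [True, True]) (y @ [True, True])" by (simp add: gk_up_cube_adj)
    moreover have E: "gk_chain (Suc (Suc m)) ?E" using gk_chain_snoc_shrink[OF S] False len by simp
    moreover have "rel_path cube_adj ?E (hd c @ [True, True]) (x @ [True, True])"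
    proof -
      have "last (butlast (snoc_shrink c)) = x @ [True]" using c by (simp add: snoc_shrink_def butlast_append)
      then show ?thesis using rel_path_gk_chain[OF E] False len by (simp add: ends_grow_shrink)
    qed
    moreover have "last (butlast c) = y" using c by (simp add: butlast_append)
    ultimately show ?thesis
      using False D(1) A(1) rel_path_append[OF _ DA] by (simp add: suffix_back_def)
  qed
qed

lemma suffix_cover:
  assumes "gk_chain m c" "odd m"
  shows "set (suffix_out c) \<union> set (trail (suffix_back c)) = {v @ [a, b] | v a b. v \<in> set c}"
proof -
  let ?X = "snoc_grow c" and ?Y = "snoc_shrink c"
  have len: "2 \<le> length c" using assms by (rule length_gk_chain_odd)
  then have Y: "?Y \<noteq> []" by (simp add: snoc_shrink_eq_Nil_iff)
  have "length c = 2 \<Longrightarrow> snoc_shrink ?Y = []" by (simp add: snoc_shrink_eq_Nil_iff)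
  then have "set (suffix_out c) \<union> set (trail (suffix_back c)) =
      (set (snoc_grow ?X) \<union> set (snoc_shrink ?X)) \<union> (set (snoc_grow ?Y) \<union> set (snoc_shrink ?Y))"
    by (auto simp: suffix_out_def suffix_back_def)
  also have "\<dots> = {w @ [b] | w b. w \<in> set ?X \<union> set ?Y}"
    unfolding set_snoc_grow_shrink[OF snoc_grow_neq_Nil] set_snoc_grow_shrink[OF Y] by auto
  also have "\<dots> = {v @ [a, b] | v a b. v \<in> set c}"
    unfolding set_snoc_grow_shrink[OF gk_chain_nonempty[OF assms(1)]] by auto
  finally show ?thesis .
qed

lemma suffix_count:
  assumes "gk_chain m c" "odd m"
  shows "length (suffix_out c) + length (trail (suffix_back c)) = 4 * length c"
  using length_gk_chain_odd[OF assms] by (simp add: suffix_out_def suffix_back_def) arith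

lemma gk_chain_path_suffix_step:
  assumes "odd m" "gk_chain_path m ds"
  defines "ds' \<equiv> lift_walk suffix_out suffix_back ds"
  shows "gk_chain_path (Suc (Suc m)) ds' \<and> cube_adj (last (trail ds')) (hd (trail ds'))"
proof -
  have "\<exists>v a b. length v = m \<and> w = v @ [a, b]" if len: "length w = Suc (Suc m)" for w :: "bool list"
  proof -
    have "w = take m w @ [w ! m, w ! Suc m]"
      using len by (simp add: list_eq_iff_nth_eq nth_append less_Suc_eq)
    then show ?thesis using len by (intro exI[of _ "take m w"] exI[of _ "w ! m"] exI[of _ "w ! Suc m"]) simp
  qed
  moreover have "successively (\<lambda>(p, _) (q, _). (\<lambda>_ v. v @ [False, True]) (\<not> p) = (\<lambda>(_ :: bool) v. v @ [False, True]) q) ds"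
    by (simp add: successively_conv_nth split_def)
  ultimately show ?thesis
    unfolding ds'_def
    using assms(1,2) suffix_out_chain suffix_back_chain suffix_count suffix_cover
    by (intro gk_chain_path_lift_walk[where f = "\<lambda>_ v. v @ [False, True]" and g = "\<lambda>v. v @ [True, True]"
          and ext = "\<lambda>v a b. v @ [a, b]"]) auto
qed

lemma gk_chain_path_0: "gk_chain_path 0 [(True, [[]])]"
  by (simp add: gk_chain_path_def gk_chain_def ham_path_def cube_vertices_def unmatched_zeros_def
      unmatched_ones_def)

lemma gk_chain_path_1: "gk_chain_path 1 [(True, [[False], [True]])]"
proof -
  have "cube_vertices 1 = {[False], [True]}"
    by (auto simp: cube_vertices_def length_Suc_conv)
  moreover have "gk_up [False] = Some [True]"
    by (simp add: gk_up_def unmatched_zeros_def)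
  ultimately show ?thesis
    by (simp add: gk_chain_path_def gk_chain_def ham_path_def unmatched_zeros_def unmatched_ones_def)
qed

lemma gk_chain_path_exists:
  "\<exists>ds. gk_chain_path n ds \<and> (even n \<longrightarrow> distinct_adj (map fst ds)) \<and>
     (2 \<le> n \<longrightarrow> cube_adj (last (trail ds)) (hd (trail ds)))"
proof (induction n rule: less_induct)
  case (less n)
  consider "n = 0" | "n = 1" | m where "n = Suc (Suc m)" by (metis One_nat_def not0_implies_Suc)
  then show ?case
  proof cases
    case 1
    then show ?thesis using gk_chain_path_0 by fastforce
  next
    case 2
    then show ?thesis using gk_chain_path_1 by fastforce
  next
    case 3
    then obtain ds where ds: "gk_chain_path m ds" "even m \<longrightarrow> distinct_adj (map fst ds)"
      using less.IH[of m] by auto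
    show ?thesis
    proof (cases "even m")
      case True
      then show ?thesis using gk_chain_path_frame_step[of m ds] ds 3 by auto
    next
      case False
      then show ?thesis using gk_chain_path_suffix_step[of m ds] ds 3 by auto
    qed
  qed
qed

lemma ham_cycle_if_closed_ham_path:
  assumes "2 \<le> n" "ham_path n P" "cube_adj (last P) (hd P)"
  shows "ham_cycle n P"
proof -
  have "(2::nat) ^ 2 \<le> 2 ^ n" using assms(1) by (intro power_increasing) auto
  then have len: "4 \<le> length P" using length_ham_path[OF assms(2)] by simp
  have "cube_adj (P ! i) (P ! ((i + 1) mod length P))" if "i < length P" for i
  proof (cases "Suc i < length P")
    case True
    then show ?thesis using assms(2) successively_nth[of cube_adj P i] by (simp add: ham_path_def)
  next
    case False
    then have "i = length P - 1" "P \<noteq> []" using that by auto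
    then show ?thesis using assms(3) False that by (simp add: last_conv_nth hd_conv_nth)
  qed
  then show ?thesis using assms(2) len by (simp add: ham_cycle_def ham_path_def)
qed

lemma doubleton_in_cycle_edges: "{s, t} \<in> cycle_edges (A @ s # t # B)"
proof -
  let ?C = "A @ s # t # B" and ?i = "length A"
  have "?C ! ?i = s" "?C ! ((?i + 1) mod length ?C) = t" by (simp_all add: nth_append)
  moreover have "?i < length ?C" by simp
  ultimately show ?thesis unfolding cycle_edges_def by (intro CollectI exI[of _ ?i]) simp
qed

lemma gk_up_edge_in_cycle_edges:
  assumes "\<forall>(q, c)\<in>set ds. gk_chain n c" "x \<in> set (trail ds)" "gk_up x = Some y"
  shows "{x, y} \<in> cycle_edges (trail ds)"
proof -
  obtain q c where qc: "(q, c) \<in> set ds" "x \<in> set c" using assms(2) by (auto simp: set_trail)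
  then have c: "gk_chain n c" using assms(1) by auto
  obtain pre rest where c_eq: "c = pre @ x # rest" using split_list[OF qc(2)] by blast
  have "rest \<noteq> []"
    using c c_eq gk_up_unmatched_nonempty[OF assms(3)] by (auto simp: gk_chain_def)
  then obtain y' rest' where "rest = y' # rest'" by (cases rest) auto
  moreover have "successively (\<lambda>x y. gk_up x = Some y) (x # rest)"
    using c c_eq by (simp add: gk_chain_def successively_append_iff)
  ultimately have c_eq': "c = pre @ x # y # rest'" using c_eq assms(3) by simp
  obtain ds1 ds2 where "ds = ds1 @ (q, c) # ds2" using split_list[OF qc(1)] by blast
  then have "trail ds = trail ds1 @ orient q c @ trail ds2" by simp
  then show ?thesis
    using doubleton_in_cycle_edges[where A = "trail ds1 @ pre" and B = "rest' @ trail ds2" and s = x and t = y]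
      doubleton_in_cycle_edges[where A = "trail ds1 @ rev rest'" and B = "rev pre @ trail ds2" and s = y and t = x]
    by (cases q) (simp_all add: c_eq' insert_commute)
qed

lemma gk_chain_edges_subset_cycle_edges:
  assumes "gk_chain_path n ds"
  shows "gk_chain_edges n \<subseteq> cycle_edges (trail ds)"
proof
  fix e assume "e \<in> gk_chain_edges n"
  then obtain x y where e: "e = {x, y}" "x \<in> cube_vertices n" "gk_up x = Some y \<or> gk_down x = Some y"
    unfolding gk_chain_edges_def by blast
  have chains: "\<forall>(q, c)\<in>set ds. gk_chain n c" and V: "set (trail ds) = cube_vertices n"
    using assms by (simp_all add: gk_chain_path_def ham_path_def)
  from e(3) show "e \<in> cycle_edges (trail ds)"
  proof
    assume "gk_up x = Some y"
    then show ?thesis using gk_up_edge_in_cycle_edges[OF chains] e(1,2) V by blast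
  next
    assume down: "gk_down x = Some y"
    then have "y \<in> set (trail ds)" using e(2) V length_gk_down[OF down] by (simp add: cube_vertices_def)
    then show ?thesis
      using gk_up_edge_in_cycle_edges[OF chains _ gk_down_imp_gk_up[OF down]] e(1) by (simp add: insert_commute)
  qed
qed

theorem theorem3:
  fixes n :: nat
  assumes "n \<ge> 2"
  shows "\<exists>C. ham_cycle n C \<and> gk_chain_edges n \<subseteq> cycle_edges C"
proof -
  obtain ds where "gk_chain_path n ds" "cube_adj (last (trail ds)) (hd (trail ds))"
    using gk_chain_path_exists[of n] assms by blast
  then have "ham_cycle n (trail ds) \<and> gk_chain_edges n \<subseteq> cycle_edges (trail ds)"
    using assms ham_cycle_if_closed_ham_path gk_chain_edges_subset_cycle_edges by (simp add: gk_chain_path_def)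
  then show ?thesis by blast
qed

end
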